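(* Let $G\subset\mathbb R^r$ be a lattice of rank $r$ acting on $C(\mathbb R^r)$ by $f^g(x)=f(x+g)$, and let $n\in\mathbb Z_+$. A function $p\in C(\mathbb R^r)$ is a $G$-periodic polynomial of degree at most $n$ if and only if $D^{n+1}p=0$; that is, $P_n^G=\mathcal P_n(G,C(\mathbb R^r))$.
   Context: $C(\mathbb R^r)$ is the algebra of continuous (real or complex) functions on $\mathbb R^r$; $x_1,\dots,x_r$ are the standard coordinates. $C^G$ is the subalgebra of $G$-periodic continuous functions ($f(x+g)=f(x)$ for all $g\in G$). $P_n^G$ is the space of polynomials in $x_1,\dots,x_r$ of degree at most $n$ with coefficients in $C^G$. $\mathcal C^0(G,A)=A$; for $n\ge1$, $\mathcal C^n(G,A)$ is the space of functions $G^n\to A$ vanishing whenever some argument is $0$; $(d_nc)(g_1,\dots,g_n)=[c(g_1,\dots,g_{n-1})]^{g_n}-c(g_1,\dots,g_{n-1})$; $D^0=\mathrm{id}$, $D^n=d_nD^{n-1}$; $\mathcal P_n(G,A)=\ker D^{n+1}$. *)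

theory Defs
  imports "HOL-Analysis.Analysis"
begin

text \<open>A lattice of rank r in R^r (here R^r = real^'r, r = CARD('r)):
  the integer span of r linearly independent vectors.\<close>
definition full_lattice :: "(real^'r) set \<Rightarrow> bool" where
  "full_lattice G \<longleftrightarrow> (\<exists>b :: 'r \<Rightarrow> real^'r. inj b \<and> independent (range b) \<and>
      G = range (\<lambda>k :: 'r \<Rightarrow> int. \<Sum>i\<in>UNIV. of_int (k i) *\<^sub>R b i))"

definition periodic_cont :: "(real^'r) set \<Rightarrow> (real^'r \<Rightarrow> 'a::real_normed_field) \<Rightarrow> bool" where
  "periodic_cont G f \<longleftrightarrow> continuous_on UNIV f \<and> (\<forall>g\<in>G. \<forall>x. f (x + g) = f x)"

definition periodic_poly :: "(real^'r) set \<Rightarrow> nat \<Rightarrow> (real^'r \<Rightarrow> 'a::real_normed_field) \<Rightarrow> bool" where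
  "periodic_poly G n p \<longleftrightarrow> (\<exists>c :: ('r \<Rightarrow> nat) \<Rightarrow> real^'r \<Rightarrow> 'a.
      (\<forall>\<alpha>. periodic_cont G (c \<alpha>)) \<and>
      p = (\<lambda>x. \<Sum>\<alpha>\<in>{\<alpha>. sum \<alpha> UNIV \<le> n}. c \<alpha> x * (\<Prod>i\<in>UNIV. of_real (x $ i) ^ \<alpha> i)))"

text \<open>D^n p as a cochain: arguments (g_1,...,g_n) as a list of length n;
  (D^{n+1} p)(g_1..g_{n+1}) = [D^n p (g_1..g_n)]^{g_{n+1}} - D^n p (g_1..g_n),
  with the action f^g(x) = f(x+g).\<close>
fun Dop :: "nat \<Rightarrow> (real^'r \<Rightarrow> 'a::ab_group_add) \<Rightarrow> (real^'r) list \<Rightarrow> (real^'r \<Rightarrow> 'a)" where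
  "Dop 0 p gs = p"
| "Dop (Suc n) p gs = (\<lambda>x. Dop n p (butlast gs) (x + last gs) - Dop n p (butlast gs) x)"

definition D_vanishes :: "(real^'r) set \<Rightarrow> nat \<Rightarrow> (real^'r \<Rightarrow> 'a::ab_group_add) \<Rightarrow> bool" where
  "D_vanishes G m p \<longleftrightarrow> (\<forall>gs. length gs = m \<and> set gs \<subseteq> G \<longrightarrow> Dop m p gs = (\<lambda>_. 0))"

end

theory Submission
  imports Defs
begin

(*
  A difference along a period kills G-periodic functions and lowers the degree in P_k^G by one
  (the coefficients are periodic), so D^(n+1) annihilates P_n^G.

  Conversely, induct on n. Let b be a basis of G and y_i the dual linear coordinates, so that
  y_i(x + b_j) = y_i(x) + delta_ij. If D^(n+1) p = 0, every n-th difference Delta^M p along the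
  lattice is G-periodic, and subtracting from p the Newton-type interpolant
  q = sum_{|M| = n} (Delta_b^M p) * prod_i binom(y_i, M_i) leaves a function u = p - q with
  D^(n+1) u = 0 whose n-th differences along the basis vectors vanish. As D^(n+1) u = 0 makes
  each n-th difference additive in each of its steps, the n-th differences of u vanish along
  all of G, and u lies in P_(n-1)^G by induction.
*)

definition fdiff :: "'v::plus \<Rightarrow> ('v \<Rightarrow> 'a::minus) \<Rightarrow> 'v \<Rightarrow> 'a" where
  "fdiff g f = (\<lambda>x. f (x + g) - f x)"

lemma fdiff_fdiff_commute:
  "fdiff g (fdiff h f) = fdiff h (fdiff g (f :: 'v::ab_semigroup_add \<Rightarrow> 'a::ab_group_add))"
  by (simp add: fdiff_def fun_eq_iff algebra_simps)

lemma fdiff_add: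
  fixes f :: "'v::ab_semigroup_add \<Rightarrow> 'a::ab_group_add"
  shows "fdiff (g + h) f x = fdiff g f x + fdiff h f x + fdiff h (fdiff g f) x"
  by (simp add: fdiff_def algebra_simps)

lemma fdiff_eq_0_iff: "fdiff g f = (\<lambda>_. 0) \<longleftrightarrow> (\<forall>x. f (x + g) = (f x :: 'a::ab_group_add))"
  by (simp add: fdiff_def fun_eq_iff)

(* Differences along different steps commute, so the iterated difference D^m of the paper is
   indexed by the multiset of its steps. *)
definition fdiffs :: "'v::ab_semigroup_add multiset \<Rightarrow> ('v \<Rightarrow> 'a::ab_group_add) \<Rightarrow> 'v \<Rightarrow> 'a" where
  "fdiffs M f = fold_mset fdiff f M"

interpretation fdiff: comp_fun_commute
  "fdiff :: 'v::ab_semigroup_add \<Rightarrow> ('v \<Rightarrow> 'a::ab_group_add) \<Rightarrow> 'v \<Rightarrow> 'a"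
  by unfold_locales (simp add: comp_def fdiff_fdiff_commute)

lemma fdiffs_empty [simp]: "fdiffs {#} f = f"
  by (simp add: fdiffs_def)

lemma fdiffs_add_mset [simp]: "fdiffs (add_mset g M) f = fdiff g (fdiffs M f)"
  by (simp add: fdiffs_def)

lemma fdiffs_add_mset': "fdiffs (add_mset g M) f = fdiffs M (fdiff g f)"
  by (induction M) (simp_all add: fdiff_fdiff_commute)

lemma fdiffs_zero [simp]: "fdiffs M (\<lambda>_. 0) = (\<lambda>_. 0)"
  by (induction M) (simp_all add: fdiff_def)

lemma fdiffs_diff: "fdiffs M (\<lambda>x. f x - h x) = (\<lambda>x. fdiffs M f x - fdiffs M h x)"
  by (induction M) (auto simp: fdiff_def fun_eq_iff algebra_simps)

lemma fdiffs_sum: "fdiffs M (\<lambda>x. \<Sum>a\<in>S. f a x) = (\<lambda>x. \<Sum>a\<in>S. fdiffs M (f a) x)"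
  by (induction M) (auto simp: fdiff_def fun_eq_iff sum_subtractf)

lemma Dop_eq_fdiffs: "length gs = m \<Longrightarrow> Dop m p gs = fdiffs (mset gs) p"
proof (induction m arbitrary: gs)
  case (Suc m)
  then obtain hs g where "gs = hs @ [g]" and "length hs = m"
    by (metis length_Suc_conv_rev)
  with Suc.IH show ?case
    by (simp add: fdiff_def)
qed simp

definition diffs_vanish :: "'v::ab_semigroup_add set \<Rightarrow> nat \<Rightarrow> ('v \<Rightarrow> 'a::ab_group_add) \<Rightarrow> bool" where
  "diffs_vanish G m p \<longleftrightarrow> (\<forall>M. size M = m \<and> set_mset M \<subseteq> G \<longrightarrow> fdiffs M p = (\<lambda>_. 0))"

lemma D_vanishes_iff_diffs_vanish: "D_vanishes G m p \<longleftrightarrow> diffs_vanish G m p"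
  unfolding D_vanishes_def diffs_vanish_def
  by (metis Dop_eq_fdiffs ex_mset set_mset_mset size_mset)

lemma periodic_cont_const: "periodic_cont G (\<lambda>_. c)"
  by (simp add: periodic_cont_def)

lemma periodic_cont_add:
  "periodic_cont G f \<Longrightarrow> periodic_cont G h \<Longrightarrow> periodic_cont G (\<lambda>x. f x + h x)"
  by (auto simp: periodic_cont_def intro!: continuous_intros)

lemma periodic_cont_mult:
  "periodic_cont G f \<Longrightarrow> periodic_cont G h \<Longrightarrow> periodic_cont G (\<lambda>x. f x * h x)"
  by (auto simp: periodic_cont_def intro!: continuous_intros)

lemma periodic_cont_shift: "periodic_cont G c \<Longrightarrow> g \<in> G \<Longrightarrow> c (x + g) = c x"
  by (simp add: periodic_cont_def)

lemma fdiff_periodic_cont: "periodic_cont G c \<Longrightarrow> g \<in> G \<Longrightarrow> fdiff g c = (\<lambda>_. 0)"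
  by (simp add: fdiff_eq_0_iff periodic_cont_shift)

lemma fdiffs_mult_periodic_cont:
  assumes "periodic_cont G c" and "set_mset M \<subseteq> G"
  shows "fdiffs M (\<lambda>x. c x * f x) = (\<lambda>x. c x * fdiffs M f x)"
  using assms(2)
  by (induction M) (auto simp: fdiff_def periodic_cont_shift[OF assms(1)] right_diff_distrib)

lemma continuous_on_fdiffs:
  fixes f :: "'v::{real_normed_vector, ab_semigroup_add} \<Rightarrow> 'a::real_normed_vector"
  shows "continuous_on UNIV f \<Longrightarrow> continuous_on UNIV (fdiffs M f)"
proof (induction M)
  case (add g M)
  then have "continuous_on UNIV (fdiffs M f)" by simp
  then have "continuous_on UNIV (\<lambda>x. fdiffs M f (x + g))"
    by (rule continuous_on_compose2) (auto intro!: continuous_intros)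
  with add show ?case
    by (auto simp: fdiff_def intro: continuous_on_diff)
qed simp

lemma periodic_cont_fdiffs_if_diffs_vanish:
  assumes "continuous_on UNIV p" and "diffs_vanish G (Suc (size M)) p" and "set_mset M \<subseteq> G"
  shows "periodic_cont G (fdiffs M p)"
  unfolding periodic_cont_def
proof (intro conjI ballI allI)
  fix g x assume "g \<in> G"
  with assms(2,3) have "fdiff g (fdiffs M p) = (\<lambda>_. 0)"
    unfolding diffs_vanish_def
    by (metis fdiffs_add_mset insert_subset set_mset_add_mset_insert size_add_mset)
  then show "fdiffs M p (x + g) = fdiffs M p x"
    by (simp add: fdiff_eq_0_iff)
qed (rule continuous_on_fdiffs[OF assms(1)])

inductive ppoly :: "(real^'r) set \<Rightarrow> nat \<Rightarrow> (real^'r \<Rightarrow> 'a::real_normed_field) \<Rightarrow> bool"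
  for G where
  periodic: "periodic_cont G c \<Longrightarrow> ppoly G k c"
| add: "ppoly G k f \<Longrightarrow> ppoly G k h \<Longrightarrow> ppoly G k (\<lambda>x. f x + h x)"
| mult_periodic: "periodic_cont G c \<Longrightarrow> ppoly G k f \<Longrightarrow> ppoly G k (\<lambda>x. c x * f x)"
| mult_coord: "ppoly G k f \<Longrightarrow> ppoly G (Suc k) (\<lambda>x. of_real (x $ i) * f x)"

lemma ppoly_const: "ppoly G k (\<lambda>_. c)"
  by (rule ppoly.periodic[OF periodic_cont_const])

lemma ppoly_cmult: "ppoly G k f \<Longrightarrow> ppoly G k (\<lambda>x. c * f x)"
  by (rule ppoly.mult_periodic[OF periodic_cont_const])

lemma ppoly_diff: "ppoly G k f \<Longrightarrow> ppoly G k h \<Longrightarrow> ppoly G k (\<lambda>x. f x - h x)"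
  using ppoly.add[of G k f "\<lambda>x. (-1) * h x"] ppoly_cmult[of G k h "-1"] by simp

lemma ppoly_Suc: "ppoly G k f \<Longrightarrow> ppoly G (Suc k) f"
proof (induction rule: ppoly.induct)
  case (add k f h)
  show ?case by (rule ppoly.add[OF add.IH])
next
  case (mult_periodic c k f)
  show ?case by (rule ppoly.mult_periodic[OF mult_periodic(1) mult_periodic.IH])
next
  case (mult_coord k f i)
  show ?case by (rule ppoly.mult_coord[OF mult_coord.IH])
qed (rule ppoly.periodic)

lemma ppoly_mono: "ppoly G k f \<Longrightarrow> k \<le> m \<Longrightarrow> ppoly G m f"
  by (induction m) (auto simp: le_Suc_eq intro: ppoly_Suc)

lemma ppoly_sum: "(\<And>a. a \<in> S \<Longrightarrow> ppoly G k (f a)) \<Longrightarrow> ppoly G k (\<lambda>x. \<Sum>a\<in>S. f a x)"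
  by (induction S rule: infinite_finite_induct) (simp_all add: ppoly_const ppoly.add)

lemma ppoly_mult: "ppoly G k f \<Longrightarrow> ppoly G l h \<Longrightarrow> ppoly G (k + l) (\<lambda>x. f x * h x)"
proof (induction rule: ppoly.induct)
  case (periodic c k)
  then have "ppoly G (k + l) h" by (simp add: ppoly_mono)
  with periodic(1) show ?case by (rule ppoly.mult_periodic)
next
  case (add k f1 f2)
  then show ?case
    using ppoly.add[OF add.IH] by (simp add: distrib_right)
next
  case (mult_periodic c k f)
  then show ?case
    using ppoly.mult_periodic[OF mult_periodic(1) mult_periodic.IH] by (simp add: mult.assoc)
next
  case (mult_coord k f i)
  then show ?case
    using ppoly.mult_coord[OF mult_coord.IH, of i] by (simp add: mult.assoc)
qed

lemma ppoly_prod: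
  "(\<And>a. a \<in> S \<Longrightarrow> ppoly G (d a) (f a)) \<Longrightarrow> ppoly G (\<Sum>a\<in>S. d a) (\<lambda>x. \<Prod>a\<in>S. f a x)"
  by (induction S rule: infinite_finite_induct) (simp_all add: ppoly_const ppoly_mult)

lemma ppoly_coord_power: "ppoly G k (\<lambda>x. of_real (x $ i) ^ k)"
proof (induction k)
  case (Suc k)
  then show ?case using ppoly.mult_coord[of G k _ i] by simp
qed (simp add: ppoly_const)

lemma continuous_on_ppoly: "ppoly G k f \<Longrightarrow> continuous_on UNIV f"
  by (induction rule: ppoly.induct) (auto simp: periodic_cont_def intro!: continuous_intros)

lemma periodic_cont_if_ppoly_0: "ppoly G 0 f \<Longrightarrow> periodic_cont G f"
  by (induction "0::nat" f rule: ppoly.induct) (auto intro: periodic_cont_add periodic_cont_mult)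

lemma ppoly_shift: "ppoly G k f \<Longrightarrow> g \<in> G \<Longrightarrow> ppoly G k (\<lambda>x. f (x + g))"
proof (induction rule: ppoly.induct)
  case (periodic c k)
  then show ?case by (simp add: periodic_cont_shift ppoly.periodic)
next
  case (add k f h)
  then show ?case by (simp add: ppoly.add)
next
  case (mult_periodic c k f)
  then show ?case
    using ppoly.mult_periodic[OF mult_periodic(1)] by (simp add: periodic_cont_shift)
next
  case (mult_coord k f i)
  then have "ppoly G k (\<lambda>x. f (x + g))" by simp
  then have "ppoly G (Suc k) (\<lambda>x. of_real (x $ i) * f (x + g) + of_real (g $ i) * f (x + g))"
    by (intro ppoly.add ppoly.mult_coord ppoly_Suc ppoly_cmult)
  then show ?case by (simp add: distrib_right)
qed

lemma ppoly_fdiff: "ppoly G k f \<Longrightarrow> g \<in> G \<Longrightarrow> ppoly G (k - 1) (fdiff g f)"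
proof (induction rule: ppoly.induct)
  case (periodic c k)
  then show ?case by (simp add: fdiff_periodic_cont ppoly_const)
next
  case (add k f h)
  then show ?case
    using ppoly.add[OF add.IH] by (simp add: fdiff_def algebra_simps)
next
  case (mult_periodic c k f)
  have "fdiff g (\<lambda>x. c x * f x) = (\<lambda>x. c x * fdiff g f x)"
    by (simp add: fdiff_def periodic_cont_shift[OF mult_periodic(1,4)] right_diff_distrib)
  with mult_periodic show ?case by (simp add: ppoly.mult_periodic)
next
  case (mult_coord k f i)
  have "fdiff g (\<lambda>x. of_real (x $ i) * f x) =
      (\<lambda>x. of_real (x $ i) * fdiff g f x + of_real (g $ i) * f (x + g))"
    by (simp add: fdiff_def fun_eq_iff algebra_simps)
  moreover have "ppoly G k (\<lambda>x. of_real (x $ i) * fdiff g f x)"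
  proof (cases k)
    case 0
    then have "fdiff g f = (\<lambda>_. 0)"
      using mult_coord fdiff_periodic_cont[OF periodic_cont_if_ppoly_0] by simp
    then show ?thesis by (simp add: ppoly_const)
  next
    case (Suc j)
    with mult_coord show ?thesis by (simp add: ppoly.mult_coord)
  qed
  ultimately show ?case
    using mult_coord by (simp add: ppoly.add ppoly_cmult ppoly_shift)
qed

lemma ppoly_fdiffs: "ppoly G k f \<Longrightarrow> set_mset M \<subseteq> G \<Longrightarrow> ppoly G (k - size M) (fdiffs M f)"
proof (induction M)
  case (add g M)
  then have "ppoly G (k - size M - 1) (fdiff g (fdiffs M f))"
    by (intro ppoly_fdiff) auto
  then show ?case by simp
qed simp

lemma diffs_vanish_if_ppoly:
  assumes "ppoly G n f"
  shows "diffs_vanish G (Suc n) f"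
  unfolding diffs_vanish_def
proof (intro allI impI)
  fix M assume M: "size M = Suc n \<and> set_mset M \<subseteq> G"
  then obtain g where g: "g \<in># M"
    by (metis multiset_nonemptyE nat.simps(3) size_empty)
  define M' where "M' = M - {#g#}"
  have M_eq: "M = add_mset g M'"
    using g by (simp add: M'_def)
  with M have "size M' = n" and "set_mset M' \<subseteq> G"
    by auto
  then have "periodic_cont G (fdiffs M' f)"
    using ppoly_fdiffs[OF assms, of M'] by (intro periodic_cont_if_ppoly_0) simp
  then show "fdiffs M f = (\<lambda>_. 0)"
    using M g M_eq by (simp add: fdiff_periodic_cont subset_iff)
qed

definition coord_monomial :: "('r \<Rightarrow> nat) \<Rightarrow> real^'r \<Rightarrow> 'a::real_normed_field" where
  "coord_monomial \<alpha> x = (\<Prod>i\<in>UNIV. of_real (x $ i) ^ \<alpha> i)"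

lemma finite_multidegrees: "finite {\<alpha> :: 'r::finite \<Rightarrow> nat. sum \<alpha> UNIV \<le> n}"
proof (rule finite_subset)
  show "{\<alpha> :: 'r \<Rightarrow> nat. sum \<alpha> UNIV \<le> n} \<subseteq> PiE UNIV (\<lambda>_. {..n})"
  proof
    fix \<alpha> :: "'r \<Rightarrow> nat" assume "\<alpha> \<in> {\<alpha>. sum \<alpha> UNIV \<le> n}"
    then have "\<alpha> i \<le> n" for i
      using member_le_sum[of i UNIV \<alpha>] by simp
    then show "\<alpha> \<in> PiE UNIV (\<lambda>_. {..n})"
      by (simp add: PiE_UNIV_domain)
  qed
qed (simp add: finite_PiE)

lemma periodic_poly_iff:
  "periodic_poly G n p \<longleftrightarrow> (\<exists>c. (\<forall>\<alpha>. periodic_cont G (c \<alpha>)) \<and>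
     p = (\<lambda>x. \<Sum>\<alpha>\<in>{\<alpha>. sum \<alpha> UNIV \<le> n}. c \<alpha> x * coord_monomial \<alpha> x))"
  unfolding periodic_poly_def coord_monomial_def ..

lemma ppoly_coord_monomial: "ppoly G (sum \<alpha> UNIV) (coord_monomial \<alpha>)"
  unfolding coord_monomial_def[abs_def] by (rule ppoly_prod) (rule ppoly_coord_power)

lemma ppoly_if_periodic_poly: "periodic_poly G n p \<Longrightarrow> ppoly G n p"
  unfolding periodic_poly_iff
  by (auto intro!: ppoly_sum ppoly.mult_periodic ppoly_mono[OF ppoly_coord_monomial])

lemma periodic_poly_periodic_cont: "periodic_cont G c \<Longrightarrow> periodic_poly G n c"
  unfolding periodic_poly_iff
proof (intro exI conjI)
  assume "periodic_cont G c"
  then show "\<forall>\<alpha>. periodic_cont G (if \<alpha> = (\<lambda>_. 0) then c else (\<lambda>_. 0))"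
    by (simp add: periodic_cont_const)
  show "c = (\<lambda>x. \<Sum>\<alpha>\<in>{\<alpha>. sum \<alpha> UNIV \<le> n}.
      (if \<alpha> = (\<lambda>_. 0) then c else (\<lambda>_. 0)) x * coord_monomial \<alpha> x)"
    by (simp add: if_distrib if_distribR sum.delta[OF finite_multidegrees] coord_monomial_def
        cong: if_cong)
qed

lemma periodic_poly_add:
  assumes "periodic_poly G n f" and "periodic_poly G n h"
  shows "periodic_poly G n (\<lambda>x. f x + h x)"
proof -
  obtain c d where "\<forall>\<alpha>. periodic_cont G (c \<alpha>)" "\<forall>\<alpha>. periodic_cont G (d \<alpha>)"
    and "f = (\<lambda>x. \<Sum>\<alpha>\<in>{\<alpha>. sum \<alpha> UNIV \<le> n}. c \<alpha> x * coord_monomial \<alpha> x)"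
    and "h = (\<lambda>x. \<Sum>\<alpha>\<in>{\<alpha>. sum \<alpha> UNIV \<le> n}. d \<alpha> x * coord_monomial \<alpha> x)"
    using assms unfolding periodic_poly_iff by blast
  then show ?thesis
    unfolding periodic_poly_iff
    by (intro exI[of _ "\<lambda>\<alpha> x. c \<alpha> x + d \<alpha> x"])
      (simp add: periodic_cont_add sum.distrib distrib_right)
qed

lemma periodic_poly_mult_periodic_cont:
  assumes "periodic_cont G c" and "periodic_poly G n f"
  shows "periodic_poly G n (\<lambda>x. c x * f x)"
proof -
  obtain d where "\<forall>\<alpha>. periodic_cont G (d \<alpha>)"
    and "f = (\<lambda>x. \<Sum>\<alpha>\<in>{\<alpha>. sum \<alpha> UNIV \<le> n}. d \<alpha> x * coord_monomial \<alpha> x)"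
    using assms(2) unfolding periodic_poly_iff by blast
  with assms(1) show ?thesis
    unfolding periodic_poly_iff
    by (intro exI[of _ "\<lambda>\<alpha> x. c x * d \<alpha> x"])
      (simp add: periodic_cont_mult sum_distrib_left mult.assoc)
qed

lemma coord_monomial_add_unit:
  "coord_monomial (\<lambda>j. \<alpha> j + of_bool (j = i)) x =
    (of_real (x $ i) :: 'a::real_normed_field) * coord_monomial \<alpha> x"
proof -
  have "coord_monomial (\<lambda>j. \<alpha> j + of_bool (j = i)) x =
      coord_monomial \<alpha> x * (\<Prod>j\<in>UNIV. of_real (x $ j) ^ of_bool (j = i))"
    unfolding coord_monomial_def power_add prod.distrib ..
  also have "(\<Prod>j\<in>UNIV. of_real (x $ j) ^ of_bool (j = i)) = (of_real (x $ i) :: 'a)"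
    by (simp add: of_bool_def if_distrib prod.delta cong: if_cong)
  finally show ?thesis
    by (simp add: mult.commute)
qed

lemma sum_multidegrees_add_unit:
  "(\<Sum>\<alpha>\<in>{\<alpha>. sum \<alpha> UNIV \<le> n}. g (\<lambda>j. \<alpha> j + of_bool (j = i))) =
    (\<Sum>\<beta>\<in>{\<beta> :: 'r::finite \<Rightarrow> nat. sum \<beta> UNIV \<le> Suc n \<and> 0 < \<beta> i}. g \<beta>)"
proof (rule sum.reindex_bij_witness
    [of _ "\<lambda>\<beta> j. \<beta> j - of_bool (j = i)" "\<lambda>\<alpha> j. \<alpha> j + of_bool (j = i)"])
  fix \<beta> :: "'r \<Rightarrow> nat" assume "\<beta> \<in> {\<beta>. sum \<beta> UNIV \<le> Suc n \<and> 0 < \<beta> i}"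
  then have \<beta>: "sum \<beta> UNIV \<le> Suc n" "0 < \<beta> i" by auto
  have unshift: "\<beta> j - of_bool (j = i) + of_bool (j = i) = \<beta> j" for j
    using \<beta>(2) by (cases "j = i") simp_all
  then show "(\<lambda>j. \<beta> j - of_bool (j = i) + of_bool (j = i)) = \<beta>"
    by simp
  have "sum \<beta> UNIV = sum (\<lambda>j. \<beta> j - of_bool (j = i) + of_bool (j = i)) UNIV"
    by (simp only: unshift)
  also have "\<dots> = sum (\<lambda>j. \<beta> j - of_bool (j = i)) UNIV + 1"
    by (simp add: sum.distrib)
  finally have "sum \<beta> UNIV = sum (\<lambda>j. \<beta> j - of_bool (j = i)) UNIV + 1" .
  with \<beta>(1) show "(\<lambda>j. \<beta> j - of_bool (j = i)) \<in> {\<alpha>. sum \<alpha> UNIV \<le> n}"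
    by simp
qed (auto simp: sum.distrib)

lemma periodic_poly_mult_coord:
  fixes f :: "real^'r \<Rightarrow> 'a::real_normed_field"
  assumes "periodic_poly G n f"
  shows "periodic_poly G (Suc n) (\<lambda>x. of_real (x $ i) * f x)"
proof -
  obtain c where c: "\<forall>\<alpha>. periodic_cont G (c \<alpha>)"
    and f: "f = (\<lambda>x. \<Sum>\<alpha>\<in>{\<alpha>. sum \<alpha> UNIV \<le> n}. c \<alpha> x * coord_monomial \<alpha> x)"
    using assms unfolding periodic_poly_iff by blast
  define c' where "c' \<beta> = (if 0 < \<beta> i then c (\<lambda>j. \<beta> j - of_bool (j = i)) else (\<lambda>_. 0))" for \<beta>
  have "of_real (x $ i) * f x =
      (\<Sum>\<alpha>\<in>{\<alpha>. sum \<alpha> UNIV \<le> n}. c' (\<lambda>j. \<alpha> j + of_bool (j = i)) x *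
        coord_monomial (\<lambda>j. \<alpha> j + of_bool (j = i)) x)" for x
    by (simp add: f c'_def coord_monomial_add_unit sum_distrib_left mult.left_commute)
  also have "\<dots> x = (\<Sum>\<beta>\<in>{\<beta>. sum \<beta> UNIV \<le> Suc n \<and> 0 < \<beta> i}. c' \<beta> x * coord_monomial \<beta> x)" for x
    by (rule sum_multidegrees_add_unit)
  also have "\<dots> x = (\<Sum>\<beta>\<in>{\<beta>. sum \<beta> UNIV \<le> Suc n}. c' \<beta> x * coord_monomial \<beta> x)" for x
    by (rule sum.mono_neutral_left) (auto simp: finite_multidegrees c'_def)
  finally have "(\<lambda>x. of_real (x $ i) * f x) =
      (\<lambda>x. \<Sum>\<beta>\<in>{\<beta>. sum \<beta> UNIV \<le> Suc n}. c' \<beta> x * coord_monomial \<beta> x)"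
    by simp
  moreover have "\<forall>\<beta>. periodic_cont G (c' \<beta>)"
    using c by (simp add: c'_def periodic_cont_const)
  ultimately show ?thesis
    unfolding periodic_poly_iff by blast
qed

lemma periodic_poly_if_ppoly: "ppoly G n p \<Longrightarrow> periodic_poly G n p"
  by (induction rule: ppoly.induct)
    (simp_all add: periodic_poly_periodic_cont periodic_poly_add periodic_poly_mult_periodic_cont
      periodic_poly_mult_coord)

lemma periodic_poly_iff_ppoly: "periodic_poly G n p \<longleftrightarrow> ppoly G n p"
  using periodic_poly_if_ppoly ppoly_if_periodic_poly by blast

definition int_span :: "('r::finite \<Rightarrow> 'v::real_vector) \<Rightarrow> 'v set" where
  "int_span b = range (\<lambda>k::'r \<Rightarrow> int. \<Sum>i\<in>UNIV. of_int (k i) *\<^sub>R b i)"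

lemma full_lattice_iff:
  "full_lattice G \<longleftrightarrow> (\<exists>b :: 'r \<Rightarrow> real^'r. inj b \<and> independent (range b) \<and> G = int_span b)"
  unfolding full_lattice_def int_span_def ..

lemma int_span_add: "g \<in> int_span b \<Longrightarrow> h \<in> int_span b \<Longrightarrow> g + h \<in> int_span b"
  unfolding int_span_def
  by (auto simp: sum.distrib scaleR_add_left intro!: image_eqI[of _ _ "\<lambda>i. _ i + _ i"])

lemma int_span_scaleR_basis: "of_int c *\<^sub>R b i \<in> int_span b"
proof -
  have "(\<Sum>j\<in>UNIV. of_int (if j = i then c else 0) *\<^sub>R b j) =
      (\<Sum>j\<in>UNIV. if j = i then of_int c *\<^sub>R b j else 0)"
    by (rule sum.cong) auto
  then show ?thesis
    unfolding int_span_def by (simp add: image_iff) (metis (no_types))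
qed

lemma int_span_basis: "b i \<in> int_span b"
  using int_span_scaleR_basis[of 1 b i] by simp

lemma int_span_uminus_basis: "- b i \<in> int_span b"
  using int_span_scaleR_basis[of "-1" b i] by simp

lemma int_span_induct [consumes 1, case_names zero basis uminus_basis add]:
  assumes "g \<in> int_span b"
    and zero: "P 0"
    and basis: "\<And>i. P (b i)"
    and uminus_basis: "\<And>i. P (- b i)"
    and add: "\<And>g h. g \<in> int_span b \<Longrightarrow> h \<in> int_span b \<Longrightarrow> P g \<Longrightarrow> P h \<Longrightarrow> P (g + h)"
  shows "P g"
proof -
  have multiple: "P (of_int c *\<^sub>R b i)" for c i
  proof (induction c rule: int_induct[where k = 0])
    case (step1 c)
    then have "P (of_int c *\<^sub>R b i + b i)"
      by (intro add int_span_scaleR_basis int_span_basis basis)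
    then show ?case by (simp add: scaleR_add_left)
  next
    case (step2 c)
    then have "P (of_int c *\<^sub>R b i + - b i)"
      by (intro add int_span_scaleR_basis int_span_uminus_basis uminus_basis)
    then show ?case by (simp add: scaleR_diff_left)
  qed (simp add: zero)
  have "(\<Sum>i\<in>S. of_int (k i) *\<^sub>R b i) \<in> int_span b \<and> P (\<Sum>i\<in>S. of_int (k i) *\<^sub>R b i)"
    for S k
  proof (induction S rule: infinite_finite_induct)
    case (insert i S)
    then show ?case
      by (simp add: int_span_add int_span_scaleR_basis add multiple)
  qed (simp_all add: zero int_span_def image_iff exI[of _ "\<lambda>_. 0"])
  with assms(1) show ?thesis
    unfolding int_span_def by blast
qed

(* Vanishing second differences make g \<mapsto> fdiff g F additive (fdiff_add), so it vanishes
   on the lattice once it vanishes on its basis. *)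
lemma fdiff_eq_0_on_int_span:
  fixes F :: "'v::real_vector \<Rightarrow> 'a::ab_group_add"
  assumes second: "\<And>g h. g \<in> int_span b \<Longrightarrow> h \<in> int_span b \<Longrightarrow> fdiff h (fdiff g F) = (\<lambda>_. 0)"
    and basis: "\<And>i. fdiff (b i) F = (\<lambda>_. 0)"
    and "g \<in> int_span b"
  shows "fdiff g F = (\<lambda>_. 0)"
  using assms(3)
proof (induction rule: int_span_induct)
  case zero
  then show ?case by (simp add: fdiff_def)
next
  case (basis i)
  then show ?case by (rule assms(2))
next
  case (uminus_basis i)
  have "F (x - b i + b i) = F (x - b i)" for x
    using basis[of i] unfolding fdiff_eq_0_iff by blast
  then show ?case
    unfolding fdiff_eq_0_iff by (metis diff_add_cancel diff_conv_add_uminus)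
next
  case (add g h)
  then show ?case
    by (simp add: fun_eq_iff fdiff_add second)
qed

lemma diffs_vanish_if_basis_diffs_vanish:
  fixes u :: "'v::real_vector \<Rightarrow> 'a::ab_group_add"
  assumes vanish: "diffs_vanish (int_span b) (Suc m) u"
    and basis: "\<And>N. size N = m \<Longrightarrow> fdiffs (image_mset b N) u = (\<lambda>_. 0)"
  shows "diffs_vanish (int_span b) m u"
proof -
  have "fdiffs (M + image_mset b N) u = (\<lambda>_. 0)"
    if "set_mset M \<subseteq> int_span b" and "size M + size N = m" for M N
    using that
  proof (induction M arbitrary: N)
    case empty
    then show ?case by (simp add: basis)
  next
    case (add g M)
    define F where "F = fdiffs (M + image_mset b N) u"
    have second: "fdiff h (fdiff g' F) = (\<lambda>_. 0)" if "g' \<in> int_span b" "h \<in> int_span b" for g' h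
    proof -
      let ?L = "add_mset h (add_mset g' (M + image_mset b N))"
      have "size ?L = Suc m" and "set_mset ?L \<subseteq> int_span b"
        using add.prems that by (auto simp: int_span_basis)
      with vanish have "fdiffs ?L u = (\<lambda>_. 0)"
        unfolding diffs_vanish_def by blast
      then show ?thesis by (simp add: F_def)
    qed
    have "fdiff (b i) F = (\<lambda>_. 0)" for i
    proof -
      have "fdiffs (M + image_mset b (add_mset i N)) u = (\<lambda>_. 0)"
        using add.prems by (intro add.IH) auto
      then show ?thesis by (simp add: F_def)
    qed
    moreover have "g \<in> int_span b"
      using add.prems by simp
    ultimately have "fdiff g F = (\<lambda>_. 0)"
      using second fdiff_eq_0_on_int_span by blast
    then show ?case by (simp add: F_def)
  qed
  from this[of _ "{#}"] show ?thesis
    unfolding diffs_vanish_def by simp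
qed

lemma dual_coordinates:
  fixes b :: "'r \<Rightarrow> 'v::real_vector"
  assumes "inj b" and "independent (range b)"
  obtains y :: "'r \<Rightarrow> 'v \<Rightarrow> real"
  where "\<And>i. linear (y i)" and "\<And>i j x. y i (x + b j) = y i x + (if i = j then 1 else 0)"
proof -
  have "\<forall>i. \<exists>l. linear l \<and> (\<forall>v\<in>range b. l v = (if v = b i then 1 else 0 :: real))"
    by (intro allI linear_independent_extend[OF assms(2)])
  then obtain y :: "'r \<Rightarrow> 'v \<Rightarrow> real"
    where y: "\<forall>i. linear (y i) \<and> (\<forall>v\<in>range b. y i v = (if v = b i then 1 else 0))"
    unfolding choice_iff by blast
  have "y i (x + b j) = y i x + (if i = j then 1 else 0)" for i j x
  proof -
    have "y i (x + b j) = y i x + y i (b j)"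
      using y by (simp add: linear_add)
    moreover have "b j = b i \<longleftrightarrow> i = j"
      using assms(1) by (auto dest: injD)
    ultimately show ?thesis
      using y by simp
  qed
  with y show ?thesis using that by blast
qed

lemma linear_eq_sum_coords:
  "linear (l :: real^'r \<Rightarrow> real) \<Longrightarrow> l x = (\<Sum>i\<in>UNIV. x $ i * l (axis i 1))"
proof -
  assume l: "linear l"
  have "l x = l (\<Sum>i\<in>UNIV. x $ i *\<^sub>R axis i 1)"
    using basis_expansion[of x] by (simp add: scalar_mult_eq_scaleR)
  also have "\<dots> = (\<Sum>i\<in>UNIV. x $ i * l (axis i 1))"
    by (simp add: linear_sum[OF l] linear_cmul[OF l])
  finally show ?thesis .
qed

lemma ppoly_linear:
  fixes l :: "real^'r \<Rightarrow> real"
  assumes l: "linear l"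
  shows "ppoly G 1 (\<lambda>x. of_real (l x) :: 'a::real_normed_field)"
proof -
  define c :: "'r \<Rightarrow> 'a" where "c i = of_real (l (axis i 1))" for i
  have "ppoly G 1 (\<lambda>x. of_real (x $ i) * (1 :: 'a))" for i
    using ppoly.mult_coord[OF ppoly_const[of G 0 1]] by simp
  then have "ppoly G 1 (\<lambda>x. \<Sum>i\<in>UNIV. c i * (of_real (x $ i) * 1))"
    by (intro ppoly_sum ppoly_cmult)
  moreover have "(of_real (l x) :: 'a) = (\<Sum>i\<in>UNIV. c i * (of_real (x $ i) * 1))" for x
    unfolding linear_eq_sum_coords[OF l, of x] of_real_sum c_def by (simp add: mult.commute)
  ultimately show ?thesis
    by simp
qed

lemma ppoly_gchoose:
  assumes "ppoly G 1 (\<lambda>x. of_real (t x) :: 'a::real_normed_field)"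
  shows "ppoly G k (\<lambda>x. of_real (t x gchoose k) :: 'a)"
proof -
  have "ppoly G (\<Sum>j\<in>{0..<k}. 1) (\<lambda>x. \<Prod>j\<in>{0..<k}. (of_real (t x) :: 'a) - of_nat j)"
    by (intro ppoly_prod ppoly_diff[OF assms] ppoly_const)
  then have "ppoly G k
      (\<lambda>x. of_real (inverse (fact k)) * (\<Prod>j\<in>{0..<k}. (of_real (t x) :: 'a) - of_nat j))"
    by (simp add: ppoly_cmult)
  then show ?thesis
    by (simp add: gbinomial_prod_rev of_real_prod divide_inverse mult.commute)
qed

(* The Newton basis in the dual coordinates y of the lattice basis b: the difference along b j
   acts on it as the j-th partial derivative acts on x^M / M!. *)
definition binom_poly ::
  "('r::finite \<Rightarrow> 'v \<Rightarrow> real) \<Rightarrow> 'r multiset \<Rightarrow> 'v \<Rightarrow> 'a::real_normed_field" where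
  "binom_poly y M x = of_real (\<Prod>i\<in>UNIV. y i x gchoose count M i)"

lemma binom_poly_empty [simp]: "binom_poly y {#} = (\<lambda>_. 1)"
  by (simp add: binom_poly_def fun_eq_iff)

lemma sum_count_eq_size: "(\<Sum>i\<in>UNIV. count M i) = size (M :: 'r::finite multiset)"
  unfolding size_multiset_overloaded_eq
  by (rule sum.mono_neutral_right) (auto simp: count_eq_zero_iff)

lemma ppoly_binom_poly:
  "(\<And>i. linear (y i)) \<Longrightarrow> ppoly G (size M) (binom_poly y M)"
  unfolding binom_poly_def[abs_def] of_real_prod sum_count_eq_size[symmetric]
  by (intro ppoly_prod ppoly_gchoose ppoly_linear)

lemma fdiff_binom_poly:
  fixes y :: "'r::finite \<Rightarrow> 'v::ab_semigroup_add \<Rightarrow> real"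
  assumes shift: "\<And>i x. y i (x + v) = y i x + (if i = j then 1 else 0)"
  shows "fdiff v (binom_poly y M :: 'v \<Rightarrow> 'a::real_normed_field) =
    (if j \<in># M then binom_poly y (M - {#j#}) else (\<lambda>_. 0))"
proof
  fix x
  define R where "R = (\<Prod>i\<in>UNIV - {j}. y i x gchoose count M i)"
  have "(\<Prod>i\<in>UNIV - {j}. y i (x + v) gchoose count M i) = R"
    unfolding R_def by (rule prod.cong) (simp_all add: shift)
  then have shifted:
    "(\<Prod>i\<in>UNIV. y i (x + v) gchoose count M i) = (y j x + 1 gchoose count M j) * R"
    by (simp add: prod.remove[of UNIV j] shift)
  have unshifted: "(\<Prod>i\<in>UNIV. y i x gchoose count M i) = (y j x gchoose count M j) * R"
    by (simp add: R_def prod.remove[of UNIV j])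
  have "(\<Prod>i\<in>UNIV - {j}. y i x gchoose count (M - {#j#}) i) = R"
    unfolding R_def by (rule prod.cong) simp_all
  then have lowered:
    "(\<Prod>i\<in>UNIV. y i x gchoose count (M - {#j#}) i) = (y j x gchoose (count M j - 1)) * R"
    by (simp add: prod.remove[of UNIV j])
  have diff: "fdiff v (binom_poly y M :: 'v \<Rightarrow> 'a) x =
      of_real (((y j x + 1 gchoose count M j) - (y j x gchoose count M j)) * R)"
    unfolding fdiff_def binom_poly_def shifted unshifted left_diff_distrib of_real_diff ..
  show "fdiff v (binom_poly y M :: 'v \<Rightarrow> 'a) x =
      (if j \<in># M then binom_poly y (M - {#j#}) else (\<lambda>_. 0)) x"
  proof (cases "j \<in># M")
    case False
    then have "count M j = 0"
      by (simp add: not_in_iff)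
    with diff False show ?thesis by simp
  next
    case True
    then obtain a where "count M j = Suc a"
      by (metis count_eq_zero_iff not0_implies_Suc)
    then have "(y j x + 1 gchoose count M j) - (y j x gchoose count M j) =
        y j x gchoose (count M j - 1)"
      by (simp add: gbinomial_Suc_Suc)
    then have "fdiff v (binom_poly y M :: 'v \<Rightarrow> 'a) x = binom_poly y (M - {#j#}) x"
      unfolding diff binom_poly_def lowered by simp
    with True show ?thesis by simp
  qed
qed

lemma fdiffs_binom_poly:
  fixes y :: "'r::finite \<Rightarrow> 'v::ab_semigroup_add \<Rightarrow> real"
  assumes shift: "\<And>i j x. y i (x + b j) = y i x + (if i = j then 1 else 0)"
    and "size N = size M"
  shows "fdiffs (image_mset b N) (binom_poly y M :: 'v \<Rightarrow> 'a::real_normed_field) =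
    (\<lambda>_. if N = M then 1 else 0)"
  using assms(2)
proof (induction N arbitrary: M)
  case empty
  then show ?case by simp
next
  case (add j N)
  have "fdiffs (image_mset b (add_mset j N)) (binom_poly y M :: 'v \<Rightarrow> 'a) =
      fdiffs (image_mset b N) (fdiff (b j) (binom_poly y M))"
    by (simp only: image_mset_add_mset fdiffs_add_mset')
  also have "\<dots> = (\<lambda>_. if add_mset j N = M then 1 else 0)"
  proof (cases "j \<in># M")
    case True
    with add.prems have "size N = size (M - {#j#})"
      by (simp add: size_Diff_singleton)
    with True show ?thesis
      by (auto simp: fdiff_binom_poly[of y "b j" j, OF shift] add.IH)
  next
    case False
    then show ?thesis
      by (auto simp: fdiff_binom_poly[of y "b j" j, OF shift])
  qed
  finally show ?case .
qed

definition newton_interpolant ::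
  "('r::finite \<Rightarrow> real^'r) \<Rightarrow> ('r \<Rightarrow> real^'r \<Rightarrow> real) \<Rightarrow> nat \<Rightarrow> (real^'r \<Rightarrow> 'a::real_normed_field) \<Rightarrow>
    real^'r \<Rightarrow> 'a" where
  "newton_interpolant b y m p x =
    (\<Sum>M\<in>multisets_of_size UNIV m. fdiffs (image_mset b M) p x * binom_poly y M x)"

lemma ppoly_newton_interpolant:
  fixes b :: "'r::finite \<Rightarrow> real^'r"
  assumes "\<And>i. linear (y i)" and "continuous_on UNIV p" and "diffs_vanish (int_span b) (Suc m) p"
  shows "ppoly (int_span b) m (newton_interpolant b y m p)"
  unfolding newton_interpolant_def[abs_def]
proof (intro ppoly_sum ppoly.mult_periodic)
  fix M :: "'r multiset" assume "M \<in> multisets_of_size UNIV m"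
  then have "size M = m"
    by (simp add: multisets_of_size_def)
  then show "periodic_cont (int_span b) (fdiffs (image_mset b M) p)"
    using assms(2,3) by (intro periodic_cont_fdiffs_if_diffs_vanish) (auto simp: int_span_basis)
  show "ppoly (int_span b) m (binom_poly y M)"
    using ppoly_binom_poly[of y "int_span b" M] assms(1) \<open>size M = m\<close> by simp
qed

lemma fdiffs_newton_interpolant:
  fixes b :: "'r::finite \<Rightarrow> real^'r"
  assumes shift: "\<And>i j x. y i (x + b j) = y i x + (if i = j then 1 else 0)"
    and "continuous_on UNIV p" and "diffs_vanish (int_span b) (Suc m) p" and "size N = m"
  shows "fdiffs (image_mset b N) (newton_interpolant b y m p) = fdiffs (image_mset b N) p"
proof
  fix x
  have "fdiffs (image_mset b N) (newton_interpolant b y m p) x =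
      (\<Sum>M\<in>multisets_of_size UNIV m.
        fdiffs (image_mset b M) p x * fdiffs (image_mset b N) (binom_poly y M) x)"
    unfolding newton_interpolant_def[abs_def] fdiffs_sum
  proof (intro sum.cong refl)
    fix M :: "'r multiset" assume "M \<in> multisets_of_size UNIV m"
    then have "periodic_cont (int_span b) (fdiffs (image_mset b M) p)"
      using assms(2,3)
      by (intro periodic_cont_fdiffs_if_diffs_vanish)
        (auto simp: int_span_basis multisets_of_size_def)
    then show "fdiffs (image_mset b N) (\<lambda>x. fdiffs (image_mset b M) p x * binom_poly y M x) x =
        fdiffs (image_mset b M) p x * fdiffs (image_mset b N) (binom_poly y M) x"
      by (simp add: fdiffs_mult_periodic_cont int_span_basis image_subset_iff)
  qed
  also have "\<dots> = (\<Sum>M\<in>multisets_of_size UNIV m. if N = M then fdiffs (image_mset b M) p x else 0)"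
    using assms(4)
    by (intro sum.cong refl) (simp add: fdiffs_binom_poly[OF shift] multisets_of_size_def)
  also have "\<dots> = fdiffs (image_mset b N) p x"
    using assms(4) by (simp add: finite_multisets_of_size) (simp add: multisets_of_size_def)
  finally show "fdiffs (image_mset b N) (newton_interpolant b y m p) x =
      fdiffs (image_mset b N) p x" .
qed

lemma ppoly_if_diffs_vanish:
  fixes b :: "'r::finite \<Rightarrow> real^'r" and y :: "'r \<Rightarrow> real^'r \<Rightarrow> real"
    and p :: "real^'r \<Rightarrow> 'a::real_normed_field"
  assumes linear: "\<And>i. linear (y i)"
    and shift: "\<And>i j x. y i (x + b j) = y i x + (if i = j then 1 else 0)"
    and "continuous_on UNIV p" and "diffs_vanish (int_span b) (Suc n) p"
  shows "ppoly (int_span b) n p"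
  using assms(3,4)
proof (induction n arbitrary: p)
  case 0
  then have "periodic_cont (int_span b) (fdiffs {#} p)"
    by (intro periodic_cont_fdiffs_if_diffs_vanish) simp_all
  then show ?case by (simp add: ppoly.periodic)
next
  case (Suc n)
  define q where "q = newton_interpolant b y (Suc n) p"
  define u where "u x = p x - q x" for x
  have q: "ppoly (int_span b) (Suc n) q"
    unfolding q_def using linear Suc.prems by (rule ppoly_newton_interpolant)
  have "diffs_vanish (int_span b) (Suc (Suc n)) u"
    using Suc.prems(2) diffs_vanish_if_ppoly[OF q]
    unfolding diffs_vanish_def u_def[abs_def] fdiffs_diff by simp
  moreover have "fdiffs (image_mset b N) u = (\<lambda>_. 0)" if "size N = Suc n" for N
    using fdiffs_newton_interpolant[OF shift Suc.prems that]
    unfolding u_def[abs_def] fdiffs_diff q_def by simp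
  ultimately have "diffs_vanish (int_span b) (Suc n) u"
    by (rule diffs_vanish_if_basis_diffs_vanish)
  moreover have "continuous_on UNIV u"
    unfolding u_def[abs_def]
    using Suc.prems(1) continuous_on_ppoly[OF q] by (rule continuous_on_diff)
  ultimately have "ppoly (int_span b) n u"
    using Suc.IH by blast
  then have "ppoly (int_span b) (Suc n) (\<lambda>x. q x + u x)"
    by (intro ppoly.add q ppoly_Suc)
  then show ?case by (simp add: u_def)
qed

theorem proposition3p2:
  fixes G :: "(real^'r) set" and n :: nat and p :: "real^'r \<Rightarrow> 'a::real_normed_field"
  assumes "full_lattice G"
    and "continuous_on UNIV p"
  shows "periodic_poly G n p \<longleftrightarrow> D_vanishes G (Suc n) p"
proof -
  obtain b :: "'r \<Rightarrow> real^'r" where b: "inj b" "independent (range b)" and G: "G = int_span b"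
    using assms(1) unfolding full_lattice_iff by blast
  obtain y :: "'r \<Rightarrow> real^'r \<Rightarrow> real" where y: "\<And>i. linear (y i)"
    and shift: "\<And>i j x. y i (x + b j) = y i x + (if i = j then 1 else 0)"
    using dual_coordinates[OF b] by blast
  show ?thesis
    unfolding G periodic_poly_iff_ppoly D_vanishes_iff_diffs_vanish
    using diffs_vanish_if_ppoly ppoly_if_diffs_vanish[OF y shift assms(2)] by blast
qed

end
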